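(* For all $g,b,n\ge0$ the inverse mapping class monoid satisfies $\mathcal{IM}_{g,b,n}=E\,\mathcal{M}_{g,b,n}$, where $E$ is the set of idempotents of $\mathcal{IM}_{g,b,n}$ and $\mathcal{M}_{g,b,n}$ is the mapping class group of $S_{g,b}$ with the $n$ marked points $Q_n$ (viewed as the group of units of $\mathcal{IM}_{g,b,n}$). In particular $\mathcal{IM}_{g,b,n}$ is factorisable.
   Context: Let $S_{g,b}$ be a compact orientable surface of genus $g$ with $b$ boundary components, and $Q_n$ a fixed set of $n$ interior points. Consider homeomorphisms $f$ of $S_{g,b}$ (fixing the boundary pointwise) together with a subset $\{i_1,\dots,i_k\}\subseteq Q_n$, $0\le k\le n$, that $f$ maps bijectively onto a subset $\{j_1,\dots,j_k\}\subseteq Q_n$. If $h$ maps $\{s_1,\dots,s_l\}\subseteq Q_n$ bijectively onto $\{t_1,\dots,t_l\}\subseteq Q_n$, the composite $h\circ f$ is equipped with the set of those $i_r$ with $f(i_r)\in\{s_1,\dots,s_l\}$. The set of isotopy classes of such maps, with this composition, is the monoid $\mathcal{IM}_{g,b,n}$. $\mathcal M_{g,b,n}$ consists of the classes with $k=n$, i.e. homeomorphisms mapping $Q_n$ bijectively onto itself. A monoid $M$ is called factorisable if $M=EG$ with $E$ the set of idempotents of $M$ and $G$ a subgroup of $M$. *)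

theory Defs
  imports "HOL-Homology.Homology"
begin

definition surface_with_boundary :: "'a topology \<Rightarrow> bool" where
  "surface_with_boundary X \<longleftrightarrow>
     (\<forall>x\<in>topspace X. \<exists>U V. openin X U \<and> x \<in> U \<and>
        openin (top_of_set {z::complex. 0 \<le> Im z}) V \<and>
        (subtopology X U) homeomorphic_space (top_of_set V))"

definition manifold_interior_point :: "'a topology \<Rightarrow> 'a \<Rightarrow> bool" where
  "manifold_interior_point X x \<longleftrightarrow>
     (\<exists>U V. openin X U \<and> x \<in> U \<and> open (V::complex set) \<and>
        (subtopology X U) homeomorphic_space (top_of_set V))"

definition manifold_boundary :: "'a topology \<Rightarrow> 'a set" where
  "manifold_boundary X = {x \<in> topspace X. \<not> manifold_interior_point X x}"

text \<open>Orientability of a compact connected surface: existence of a fundamental class,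
  i.e. the top relative homology group H_2(X, boundary X) is nontrivial.\<close>

definition orientable_surface :: "'a topology \<Rightarrow> bool" where
  "orientable_surface X \<longleftrightarrow>
     carrier (relative_homology_group 2 X (manifold_boundary X))
       \<noteq> {\<one>\<^bsub>relative_homology_group 2 X (manifold_boundary X)\<^esub>}"

text \<open>A compact (connected) orientable surface S_{g,b}, for some genus g and some number b of
  boundary components; by the classification of surfaces these are exactly the S_{g,b}.\<close>

definition compact_orientable_surface :: "'a topology \<Rightarrow> bool" where
  "compact_orientable_surface X \<longleftrightarrow>
     Hausdorff_space X \<and> compact_space X \<and> connected_space X \<and>
     surface_with_boundary X \<and> orientable_surface X"

text \<open>Elements of the inverse mapping class monoid are represented by pairs (f, D):
  f a homeomorphism fixing the boundary pointwise, D a subset of the marked points Q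
  with f mapping D (bijectively, f being injective) into Q.\<close>

type_synonym 'a pmap = "('a \<Rightarrow> 'a) \<times> 'a set"

definition admissible :: "'a topology \<Rightarrow> 'a set \<Rightarrow> 'a pmap \<Rightarrow> bool" where
  "admissible X Q p \<longleftrightarrow>
     homeomorphic_map X X (fst p) \<and>
     (\<forall>x\<in>manifold_boundary X. fst p x = x) \<and>
     snd p \<subseteq> Q \<and> fst p ` snd p \<subseteq> Q"

definition pcomp :: "'a pmap \<Rightarrow> 'a pmap \<Rightarrow> 'a pmap" where
  "pcomp q p = (fst q \<circ> fst p, {d \<in> snd p. fst p d \<in> snd q})"

definition pisotopic :: "'a topology \<Rightarrow> 'a set \<Rightarrow> 'a pmap \<Rightarrow> 'a pmap \<Rightarrow> bool" where
  "pisotopic X Q p q \<longleftrightarrow>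
     snd p = snd q \<and>
     (\<exists>H. continuous_map (prod_topology (top_of_set {0..1::real}) X) X H \<and>
          (\<forall>t\<in>{0..1}. admissible X Q (\<lambda>x. H (t, x), snd p)) \<and>
          (\<forall>x\<in>topspace X. H (0, x) = fst p x \<and> H (1, x) = fst q x))"

text \<open>Idempotents of the monoid, and elements of the mapping class group M_{g,b,n}
  (the case k = n: the homeomorphism maps Q bijectively onto itself).\<close>

definition pidempotent :: "'a topology \<Rightarrow> 'a set \<Rightarrow> 'a pmap \<Rightarrow> bool" where
  "pidempotent X Q e \<longleftrightarrow> admissible X Q e \<and> pisotopic X Q (pcomp e e) e"

definition punit :: "'a topology \<Rightarrow> 'a set \<Rightarrow> 'a pmap \<Rightarrow> bool" where
  "punit X Q u \<longleftrightarrow> admissible X Q u \<and> snd u = Q \<and> fst u ` Q = Q"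

end

theory Submission
  imports Defs
begin

text \<open>A class (f, D) is the idempotent (id, f ` D) composed with a unit as soon as f is
  isotopic, relative to the boundary and to f ` D, to a homeomorphism g that permutes Q and
  agrees with f on D. To get g, the points of f ` (Q - D) have to be carried onto Q - f ` D,
  a set of the same size. This is possible because isotopies of a connected surface fixing
  the boundary and finitely many points act transitively on the remaining interior points:
  inside a chart a point is pushed anywhere nearby by a translation damped by a bump
  function, and the interior minus finitely many points is still connected.\<close>

section \<open>Connectedness\<close>

lemma openin_disjoint_closure_of_separated:
  assumes sep: "separatedin X C1 C2" and N: "openin X N" and C: "connectedin X C" "C \<subseteq> C1 \<union> C2"
    and NC: "N \<subseteq> X closure_of C"
  shows "N \<inter> X closure_of C1 = {} \<or> N \<inter> X closure_of C2 = {}"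
proof -
  have side: "N \<inter> X closure_of B = {}" if "separatedin X A B" "C \<subseteq> A" for A B
  proof -
    have "N \<subseteq> X closure_of A" using NC closure_of_mono[OF that(2)] by blast
    then have "N \<inter> B = {}" using that(1) by (auto simp: separatedin_def)
    then show ?thesis using openin_Int_closure_of_eq_empty[OF N] by blast
  qed
  show ?thesis
    using connectedin_subset_separated_union[OF C(1) sep C(2)] side[OF sep] side[OF sep[THEN separatedin_sym[THEN iffD1]]]
    by blast
qed

lemma connectedin_topspace_diff_closedin:
  assumes X: "connected_space X" and S: "closedin X S"
    and approx: "\<And>x. x \<in> S \<Longrightarrow> \<exists>N C. openin X N \<and> x \<in> N \<and> connectedin X C \<and>
                    C \<subseteq> topspace X - S \<and> N \<subseteq> X closure_of C"
  shows "connectedin X (topspace X - S)"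
  unfolding connectedin_eq_not_separated
proof (intro conjI notI)
  show "topspace X - S \<subseteq> topspace X" by blast
  assume "\<exists>C1 C2. C1 \<union> C2 = topspace X - S \<and> C1 \<noteq> {} \<and> C2 \<noteq> {} \<and> separatedin X C1 C2"
  then obtain C1 C2 where G: "C1 \<union> C2 = topspace X - S" and ne: "C1 \<noteq> {}" "C2 \<noteq> {}"
    and sep: "separatedin X C1 C2" by blast
  have not_both: "x \<notin> X closure_of C1 \<or> x \<notin> X closure_of C2" if "x \<in> topspace X" for x
  proof (cases "x \<in> S")
    case True
    then obtain N C where "openin X N" "x \<in> N" "connectedin X C" "C \<subseteq> C1 \<union> C2"
      "N \<subseteq> X closure_of C" using approx G by metis
    then show ?thesis using openin_disjoint_closure_of_separated[OF sep] by blast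
  next
    case False
    then show ?thesis using that G sep by (auto simp: separatedin_def)
  qed
  have covered: "topspace X \<subseteq> X closure_of C1 \<union> X closure_of C2"
  proof -
    have "x \<in> X closure_of (topspace X - S)" if x: "x \<in> topspace X" for x
    proof (cases "x \<in> S")
      case True
      then obtain N C where "x \<in> N" "C \<subseteq> topspace X - S" "N \<subseteq> X closure_of C"
        using approx by metis
      then show ?thesis using closure_of_mono[OF \<open>C \<subseteq> topspace X - S\<close>] by blast
    next
      case False
      then show ?thesis using x closure_of_subset[of "topspace X - S" X] by blast
    qed
    moreover have "X closure_of (topspace X - S) = X closure_of C1 \<union> X closure_of C2"
      using G closure_of_Un by metis
    ultimately show ?thesis by blast
  qed
  let ?E1 = "topspace X - X closure_of C2" and ?E2 = "topspace X - X closure_of C1"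
  have "openin X ?E1" "openin X ?E2" by auto
  moreover have "?E1 \<union> ?E2 = topspace X" using not_both by blast
  moreover have "?E1 \<inter> ?E2 = {}" using covered by blast
  moreover have "C1 \<subseteq> ?E1" "C2 \<subseteq> ?E2"
    using sep closure_of_subset_topspace by (auto simp: separatedin_def)
  ultimately show False using X ne unfolding connected_space_eq by blast
qed

lemma connectedin_locally_related:
  assumes G: "connectedin X G"
    and trans: "\<And>x y z. R x y \<Longrightarrow> R y z \<Longrightarrow> R x z"
    and local: "\<And>q. q \<in> G \<Longrightarrow> \<exists>N. openin X N \<and> q \<in> N \<and> N \<subseteq> G \<and> (\<forall>p\<in>N. \<forall>p'\<in>N. R p p')"
    and ab: "a \<in> G" "b \<in> G"
  shows "R a b"
proof -
  define A where "A = {x \<in> G. R a x}"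
  have "openin X A"
  proof (subst openin_subopen, intro ballI)
    fix q assume "q \<in> A"
    then have "q \<in> G" by (simp add: A_def)
    then obtain N where N: "openin X N" "q \<in> N" "N \<subseteq> G" "\<forall>p\<in>N. \<forall>p'\<in>N. R p p'"
      using local[OF \<open>q \<in> G\<close>] by (elim exE conjE) simp
    have "N \<subseteq> A"
    proof
      fix p assume "p \<in> N"
      then have "R a p" using trans[of a q p] N(2,4) \<open>q \<in> A\<close> by (simp add: A_def)
      then show "p \<in> A" using \<open>p \<in> N\<close> N(3) by (simp add: A_def subset_iff)
    qed
    then show "\<exists>T. openin X T \<and> q \<in> T \<and> T \<subseteq> A" using N by blast
  qed
  moreover have "openin X (G - A)"
  proof (subst openin_subopen, intro ballI)
    fix q assume q: "q \<in> G - A"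
    then have "q \<in> G" by simp
    then obtain N where N: "openin X N" "q \<in> N" "N \<subseteq> G" "\<forall>p\<in>N. \<forall>p'\<in>N. R p p'"
      using local[OF \<open>q \<in> G\<close>] by (elim exE conjE) simp
    have "N \<subseteq> G - A"
    proof
      fix p assume "p \<in> N"
      then have "\<not> R a p" using trans[of a p q] N(2,4) q by (auto simp: A_def)
      then show "p \<in> G - A" using \<open>p \<in> N\<close> N(3) by (auto simp: A_def)
    qed
    then show "\<exists>T. openin X T \<and> q \<in> T \<and> T \<subseteq> G - A" using N by blast
  qed
  moreover have "a \<in> A"
  proof -
    obtain N where "a \<in> N" "\<forall>p\<in>N. \<forall>p'\<in>N. R p p'"
      using local[OF ab(1)] by (elim exE conjE) simp
    then show ?thesis using ab(1) by (simp add: A_def)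
  qed
  moreover have "A \<subseteq> G" by (auto simp: A_def)
  ultimately have "G \<subseteq> A"
    using connectedinD[OF G, of A "G - A"] by blast
  then show ?thesis using ab(2) by (simp add: A_def subset_iff)
qed

lemma closure_open_Diff_finite:
  fixes A :: "'a::{perfect_space, t1_space} set"
  assumes "open A" "finite E"
  shows "closure (A - E) = closure A"
proof
  show "closure (A - E) \<subseteq> closure A" by (simp add: closure_mono)
  have "x islimpt A" if "x \<in> closure A" for x
    using that assms(1) open_imp_islimpt by (auto simp: closure_def)
  then have "x islimpt (E \<union> (A - E))" if "x \<in> closure A" for x
    using that islimpt_subset[of x A "E \<union> (A - E)"] by blast
  then have "x islimpt (A - E)" if "x \<in> closure A" for x
    using that islimpt_Un_finite[OF assms(2)] by blast
  then show "closure A \<subseteq> closure (A - E)" by (auto simp: closure_def)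
qed

lemma upper_half_ball_diff_finite:
  fixes z :: complex
  assumes "finite E"
  shows "open (ball z r \<inter> {u. 0 < Im u})" "connected (ball z r \<inter> {u. 0 < Im u} - E)"
    "ball z r \<inter> {u. 0 \<le> Im u} \<subseteq> closure (ball z r \<inter> {u. 0 < Im u} - E)"
proof -
  have half: "{u. 0 < Im u} = {u. \<i> \<bullet> u > 0}" "{u. 0 \<le> Im u} = {u. \<i> \<bullet> u \<ge> 0}"
    by (simp_all add: inner_complex_def)
  show "open (ball z r \<inter> {u. 0 < Im u})"
    using open_halfspace_gt[where a=\<i> and b=0] unfolding half by (intro open_Int open_ball)
  moreover have "connected (ball z r \<inter> {u. 0 < Im u})"
    by (intro convex_connected convex_Int convex_ball convex_halfspace_Im_gt)
  ultimately show "connected (ball z r \<inter> {u. 0 < Im u} - E)"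
    using countable_finite[OF assms] by (intro connected_open_diff_countable) auto
  have "ball z r \<inter> {u. 0 \<le> Im u} = ball z r \<inter> closure {u. 0 < Im u}"
    unfolding half using closure_halfspace_gt[where a=\<i> and b=0] by simp
  also have "\<dots> \<subseteq> closure (ball z r \<inter> {u. 0 < Im u})"
    by (simp add: open_Int_closure_subset)
  also have "\<dots> = closure (ball z r \<inter> {u. 0 < Im u} - E)"
    using \<open>open (ball z r \<inter> {u. 0 < Im u})\<close> assms by (rule closure_open_Diff_finite[symmetric])
  finally show "ball z r \<inter> {u. 0 \<le> Im u} \<subseteq> closure (ball z r \<inter> {u. 0 < Im u} - E)" .
qed

section \<open>Charts and the interior of a surface\<close>

lemma chart_homeomorphic_mapsD:
  assumes U: "openin X U" and chart: "homeomorphic_maps (subtopology X U) (top_of_set V) \<phi> \<psi>"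
  shows "U \<subseteq> topspace X" "\<And>x. x \<in> U \<Longrightarrow> \<phi> x \<in> V" "\<And>w. w \<in> V \<Longrightarrow> \<psi> w \<in> U"
    "\<And>x. x \<in> U \<Longrightarrow> \<psi> (\<phi> x) = x" "\<And>w. w \<in> V \<Longrightarrow> \<phi> (\<psi> w) = w"
    "continuous_map (subtopology X U) (top_of_set V) \<phi>" "continuous_map (top_of_set V) X \<psi>"
    "bij_betw \<phi> U V" "bij_betw \<psi> V U"
proof -
  show U_sub: "U \<subseteq> topspace X" using U openin_subset by blast
  then have top_U: "topspace (subtopology X U) = U" by auto
  have cont_\<psi>: "continuous_map (top_of_set V) (subtopology X U) \<psi>"
    using chart by (simp add: homeomorphic_maps_def)
  show "continuous_map (subtopology X U) (top_of_set V) \<phi>"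
    using chart by (simp add: homeomorphic_maps_def)
  then show \<phi>V: "\<And>x. x \<in> U \<Longrightarrow> \<phi> x \<in> V"
    using continuous_map_image_subset_topspace top_U by fastforce
  show \<psi>U: "\<And>w. w \<in> V \<Longrightarrow> \<psi> w \<in> U"
    using continuous_map_image_subset_topspace[OF cont_\<psi>] top_U by auto
  show \<psi>\<phi>: "\<And>x. x \<in> U \<Longrightarrow> \<psi> (\<phi> x) = x" and \<phi>\<psi>: "\<And>w. w \<in> V \<Longrightarrow> \<phi> (\<psi> w) = w"
    using chart top_U by (auto simp: homeomorphic_maps_def)
  show "continuous_map (top_of_set V) X \<psi>"
    using cont_\<psi> continuous_map_into_fulltopology by blast
  show "bij_betw \<phi> U V"
    by (rule bij_betw_byWitness[where f' = \<psi>]) (use \<phi>V \<psi>U \<psi>\<phi> \<phi>\<psi> in auto)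
  show "bij_betw \<psi> V U"
    by (rule bij_betw_byWitness[where f' = \<phi>]) (use \<phi>V \<psi>U \<psi>\<phi> \<phi>\<psi> in auto)
qed

lemma openin_chart_preimage:
  assumes U: "openin X U" and chart: "homeomorphic_maps (subtopology X U) (top_of_set V) \<phi> \<psi>"
    and "open A"
  shows "openin X {u \<in> U. \<phi> u \<in> A}"
proof -
  note chartD = chart_homeomorphic_mapsD[OF U chart]
  have "openin (subtopology X U) {u \<in> topspace (subtopology X U). \<phi> u \<in> V \<inter> A}"
    using chartD(6) \<open>open A\<close> openin_open unfolding continuous_map_def by blast
  moreover have "{u \<in> topspace (subtopology X U). \<phi> u \<in> V \<inter> A} = {u \<in> U. \<phi> u \<in> A}"
    using chartD(1,2) by auto
  ultimately show ?thesis using openin_open_subtopology[OF U] by auto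
qed

lemma chart_imp_manifold_interior_point:
  assumes U: "openin X U" and chart: "homeomorphic_maps (subtopology X U) (top_of_set V) \<phi> \<psi>"
    and A: "open A" "A \<subseteq> (V :: complex set)" and u: "u \<in> U" "\<phi> u \<in> A"
  shows "manifold_interior_point X u"
proof -
  note chartD = chart_homeomorphic_mapsD[OF U chart]
  let ?U' = "{u \<in> U. \<phi> u \<in> A}"
  have "\<phi> ` ?U' = A"
  proof
    show "A \<subseteq> \<phi> ` ?U'"
    proof
      fix w assume "w \<in> A"
      then show "w \<in> \<phi> ` ?U'" using chartD(3,5) A(2) by (intro image_eqI[of w _ "\<psi> w"]) auto
    qed
  qed auto
  moreover have "topspace (subtopology X U) \<inter> ?U' = ?U'" using chartD(1) by auto
  ultimately have "\<phi> ` (topspace (subtopology X U) \<inter> ?U') = topspace (top_of_set V) \<inter> A"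
    using A(2) by auto
  then have "homeomorphic_maps (subtopology (subtopology X U) ?U') (subtopology (top_of_set V) A) \<phi> \<psi>"
    using homeomorphic_maps_subtopologies[OF chart] by blast
  moreover have "subtopology (subtopology X U) ?U' = subtopology X ?U'"
    by (simp add: subtopology_subtopology Int_absorb1 subset_eq)
  moreover have "subtopology (top_of_set V) A = top_of_set A"
    using A(2) by (simp add: subtopology_subtopology Int_absorb1)
  ultimately have "subtopology X ?U' homeomorphic_space top_of_set A"
    using homeomorphic_maps_imp_homeomorphic_space by metis
  then show ?thesis
    unfolding manifold_interior_point_def
    using openin_chart_preimage[OF U chart A(1)] u A(1) by blast
qed

lemma closedin_manifold_boundary: "closedin X (manifold_boundary X)"
proof -
  have "openin X {x \<in> topspace X. manifold_interior_point X x}"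
  proof (subst openin_subopen, intro ballI)
    fix x assume "x \<in> {x \<in> topspace X. manifold_interior_point X x}"
    then obtain U V \<phi> \<psi> where U: "openin X U" "x \<in> U" "open (V::complex set)"
      and chart: "homeomorphic_maps (subtopology X U) (top_of_set V) \<phi> \<psi>"
      unfolding manifold_interior_point_def homeomorphic_space_def by blast
    have "U \<subseteq> {x \<in> topspace X. manifold_interior_point X x}"
      using chart_imp_manifold_interior_point[OF U(1) chart U(3) order_refl]
        chart_homeomorphic_mapsD(1,2)[OF U(1) chart] by auto
    then show "\<exists>T. openin X T \<and> x \<in> T \<and> T \<subseteq> {x \<in> topspace X. manifold_interior_point X x}"
      using U by blast
  qed
  moreover have "topspace X - manifold_boundary X = {x \<in> topspace X. manifold_interior_point X x}"
    by (auto simp: manifold_boundary_def)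
  ultimately show ?thesis by (simp add: closedin_def manifold_boundary_def)
qed

lemma homeomorphic_map_fixing_boundary_interior:
  assumes f: "homeomorphic_map X X f" and f_boundary: "\<And>x. x \<in> manifold_boundary X \<Longrightarrow> f x = x"
    and x: "x \<in> topspace X - manifold_boundary X"
  shows "f x \<in> topspace X - manifold_boundary X"
proof -
  have fx: "f x \<in> topspace X" using x homeomorphic_imp_surjective_map[OF f] by auto
  have "f x \<notin> manifold_boundary X"
  proof
    assume "f x \<in> manifold_boundary X"
    then have "f (f x) = f x" by (rule f_boundary)
    then have "f x = x"
      using homeomorphic_imp_injective_map[OF f] fx x by (auto dest: inj_onD)
    then show False using x \<open>f x \<in> manifold_boundary X\<close> by simp
  qed
  then show ?thesis using fx by blast
qed

lemma surface_point_approached_from_interior: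
  assumes X: "surface_with_boundary X" and F: "finite F" and x: "x \<in> topspace X"
  shows "\<exists>N C. openin X N \<and> x \<in> N \<and> connectedin X C \<and>
           C \<subseteq> topspace X - (manifold_boundary X \<union> F) \<and> N \<subseteq> X closure_of C"
proof -
  obtain U V where U: "openin X U" "x \<in> U"
    and V: "openin (top_of_set {z::complex. 0 \<le> Im z}) V"
    and "subtopology X U homeomorphic_space top_of_set V"
    using X x unfolding surface_with_boundary_def by blast
  then obtain \<phi> \<psi> where chart: "homeomorphic_maps (subtopology X U) (top_of_set V) \<phi> \<psi>"
    unfolding homeomorphic_space_def by blast
  note chartD = chart_homeomorphic_mapsD[OF U(1) chart]
  obtain V0 where V0: "open V0" "V = {z. 0 \<le> Im z} \<inter> V0" using V openin_open by blast
  obtain r where r: "r > 0" "ball (\<phi> x) r \<subseteq> V0"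
    using V0 chartD(2)[OF U(2)] open_contains_ball by blast
  define H where "H = ball (\<phi> x) r \<inter> {u. 0 < Im u}"
  define E where "E = \<phi> ` (F \<inter> U)"
  have "finite E" using F by (simp add: E_def)
  note H = upper_half_ball_diff_finite[OF \<open>finite E\<close>, of "\<phi> x" r, folded H_def]
  have HV: "H \<subseteq> V" using r V0 by (auto simp: H_def)
  define C where "C = \<psi> ` (H - E)"
  define N where "N = {u \<in> U. \<phi> u \<in> ball (\<phi> x) r}"
  have "connectedin X C"
  proof -
    have "connectedin (top_of_set V) (H - E)" using H(2) HV by (auto simp: connectedin_subtopology)
    then show ?thesis unfolding C_def using connectedin_continuous_map_image chartD(7) by blast
  qed
  moreover have "C \<subseteq> topspace X - (manifold_boundary X \<union> F)"
  proof
    fix y assume "y \<in> C"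
    then obtain w where w: "w \<in> H" "w \<notin> E" "y = \<psi> w" by (auto simp: C_def)
    have "y \<in> U" "\<phi> y = w" using chartD(3,5) w HV by auto
    then have "manifold_interior_point X y" "y \<notin> F"
      using chart_imp_manifold_interior_point[OF U(1) chart H(1) HV] w
      by (auto simp: E_def) (metis IntI image_eqI)
    then show "y \<in> topspace X - (manifold_boundary X \<union> F)"
      using \<open>y \<in> U\<close> chartD(1) by (auto simp: manifold_boundary_def)
  qed
  moreover have "N \<subseteq> X closure_of C"
  proof
    fix u assume u: "u \<in> N"
    then have "\<phi> u \<in> V \<inter> closure (H - E)"
      using H(3) chartD(2) V0 by (auto simp: N_def)
    also have "\<dots> = top_of_set V closure_of (H - E)"
    proof -
      have "V \<inter> (H - E) = H - E" using HV by blast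
      then show ?thesis by (simp add: closure_of_subtopology)
    qed
    finally have "\<psi> (\<phi> u) \<in> X closure_of C"
      using continuous_map_image_closure_subset[OF chartD(7)] unfolding C_def by blast
    then show "u \<in> X closure_of C" using chartD(4) u by (simp add: N_def)
  qed
  moreover have "openin X N" "x \<in> N"
    using openin_chart_preimage[OF U(1) chart open_ball] U(2) r(1) by (auto simp: N_def)
  ultimately show ?thesis by blast
qed

lemma connectedin_surface_interior_diff_finite:
  assumes X: "Hausdorff_space X" "connected_space X" "surface_with_boundary X" and F: "finite F"
  shows "connectedin X (topspace X - (manifold_boundary X \<union> F))"
proof -
  define S where "S = manifold_boundary X \<union> (F \<inter> topspace X)"
  have "closedin X S" unfolding S_def
    by (intro closedin_Un closedin_manifold_boundary closedin_Hausdorff_finite X(1)) (use F in auto)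
  moreover have S_eq: "topspace X - (manifold_boundary X \<union> F) = topspace X - S"
    by (auto simp: S_def)
  ultimately have "connectedin X (topspace X - S)"
    using connectedin_topspace_diff_closedin[OF X(2)] surface_point_approached_from_interior[OF X(3) F]
      closedin_subset by (metis S_eq subsetD)
  then show ?thesis by (simp add: S_eq)
qed

section \<open>Pushing a point across a ball\<close>

definition bump :: "'a::real_normed_vector \<Rightarrow> real \<Rightarrow> 'a \<Rightarrow> real" where
  "bump c s w = max 0 (1 - dist w c / s)"

definition push :: "'a::real_normed_vector \<Rightarrow> real \<Rightarrow> 'a \<Rightarrow> 'a \<Rightarrow> 'a" where
  "push c s v w = w + bump c s w *\<^sub>R v"

lemma bump_lipschitz:
  assumes "s > 0"
  shows "\<bar>bump c s x - bump c s y\<bar> \<le> dist x y / s"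
proof -
  have "\<bar>dist x c - dist y c\<bar> \<le> dist x y"
    using dist_triangle[of x c y] dist_triangle[of y c x] by (simp add: dist_commute)
  then have "\<bar>dist x c / s - dist y c / s\<bar> \<le> dist x y / s"
    using assms by (simp add: diff_divide_distrib[symmetric] abs_divide divide_right_mono)
  then show ?thesis unfolding bump_def by linarith
qed

lemma push_eq_self: "s > 0 \<Longrightarrow> dist w c \<ge> s \<Longrightarrow> push c s v w = w"
  by (simp add: push_def bump_def)

lemma push_centre: "s > 0 \<Longrightarrow> push c s v c = c + v"
  by (simp add: push_def bump_def)

lemma push_zero: "push c s 0 w = w"
  by (simp add: push_def)

lemma dist_push_ge:
  assumes "s > 0"
  shows "dist (push c s v x) (push c s v y) \<ge> (1 - norm v / s) * dist x y"
proof -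
  have "norm ((bump c s x - bump c s y) *\<^sub>R v) \<le> dist x y / s * norm v"
    using mult_right_mono[OF bump_lipschitz[OF assms, of c x y] norm_ge_zero[of v]] by simp
  moreover have "push c s v x - push c s v y = (x - y) + (bump c s x - bump c s y) *\<^sub>R v"
    by (simp add: push_def algebra_simps)
  moreover have "norm ((x - y) + (bump c s x - bump c s y) *\<^sub>R v) \<ge>
                   norm (x - y) - norm ((bump c s x - bump c s y) *\<^sub>R v)"
    by (metis norm_diff_ineq norm_minus_cancel diff_minus_eq_add)
  ultimately have "dist (push c s v x) (push c s v y) \<ge> dist x y - dist x y / s * norm v"
    by (simp add: dist_norm)
  then show ?thesis by (simp add: algebra_simps)
qed

lemma inj_push:
  assumes "s > 0" "norm v < s"
  shows "inj (push c s v)"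
proof (rule injI)
  fix x y assume "push c s v x = push c s v y"
  then have "(1 - norm v / s) * dist x y \<le> 0" using dist_push_ge[OF assms(1), where c=c and v=v and x=x and y=y] by simp
  moreover have "1 - norm v / s > 0" using assms by simp
  ultimately show "x = y" by (simp add: mult_le_0_iff)
qed

lemma surj_push:
  fixes c :: "'a::banach"
  assumes "s > 0" "norm v < s"
  shows "surj (push c s v)"
  unfolding surj_def
proof
  fix y
  define f where "f x = y - bump c s x *\<^sub>R v" for x
  have "dist (f x) (f z) \<le> (norm v / s) * dist x z" for x z
  proof -
    have "dist (f x) (f z) = norm ((bump c s z - bump c s x) *\<^sub>R v)"
      by (simp add: f_def dist_norm algebra_simps)
    also have "\<dots> \<le> dist z x / s * norm v"
      using mult_right_mono[OF bump_lipschitz[OF assms(1), of c z x] norm_ge_zero[of v]] by simp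
    finally show ?thesis by (simp add: dist_commute mult.commute)
  qed
  \<comment> \<open>a preimage of y is a fixed point of the contraction f\<close>
  then obtain x where "f x = x" using banach_fix_type[of "norm v / s" f] assms by auto
  then show "\<exists>x. y = push c s v x" by (auto simp: push_def f_def algebra_simps)
qed

lemma continuous_on_push: "continuous_on UNIV (\<lambda>(t::real, w). push c s (t *\<^sub>R v) w)"
  unfolding push_def bump_def split_def divide_inverse by (intro continuous_intros)

lemma dist_push_less:
  assumes "s > 0" "norm v < s" "dist w c < s"
  shows "dist (push c s v w) c < s"
proof -
  have bump: "bump c s w = 1 - dist w c / s" using assms by (simp add: bump_def)
  have "dist (push c s v w) c \<le> dist w c + bump c s w * norm v"
    using norm_triangle_ineq[of "w - c" "bump c s w *\<^sub>R v"]
    by (simp add: push_def dist_norm algebra_simps bump_def)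
  also have "\<dots> < dist w c + (1 - dist w c / s) * s"
    using assms by (simp add: bump mult_strict_left_mono)
  also have "\<dots> = s" using assms by (simp add: field_simps)
  finally show ?thesis .
qed

lemma bij_betw_push:
  fixes c :: "'a::banach"
  assumes "norm v < s" "cball c s \<subseteq> W"
  shows "bij_betw (push c s v) W W"
proof -
  have s: "s > 0" using assms(1) norm_ge_zero[of v] by linarith
  have into: "push c s v w \<in> W" if "w \<in> W" for w
  proof (cases "dist w c < s")
    case True
    then show ?thesis using dist_push_less[OF s assms(1) True] assms(2) by (auto simp: dist_commute)
  next
    case False
    then show ?thesis using that push_eq_self[OF s, where c=c and w=w and v=v] by simp
  qed
  have onto: "w \<in> W" if "push c s v w \<in> W" for w
  proof (cases "dist w c < s")
    case True
    then show ?thesis using assms(2) by (auto simp: dist_commute)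
  next
    case False
    then show ?thesis using that push_eq_self[OF s, where c=c and w=w and v=v] by simp
  qed
  have "W \<subseteq> push c s v ` W"
  proof
    fix y assume "y \<in> W"
    obtain w where "y = push c s v w" using surj_push[OF s assms(1), of c] by (metis surjD)
    then show "y \<in> push c s v ` W" using onto \<open>y \<in> W\<close> by blast
  qed
  moreover have "inj_on (push c s v) W"
    using inj_push[OF s assms(1)] by (rule inj_on_subset) simp
  ultimately show ?thesis
    using into by (auto simp: bij_betw_def)
qed

section \<open>Ambient isotopies\<close>

definition ambient_isotopy :: "'a topology \<Rightarrow> 'a set \<Rightarrow> (real \<times> 'a \<Rightarrow> 'a) \<Rightarrow> bool" where
  "ambient_isotopy X F K \<longleftrightarrow>
     continuous_map (prod_topology (top_of_set {0..1}) X) X K \<and>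
     (\<forall>t\<in>{0..1}. homeomorphic_map X X (\<lambda>x. K (t, x))) \<and>
     (\<forall>t\<in>{0..1}. \<forall>x \<in> manifold_boundary X \<union> F. K (t, x) = x) \<and>
     (\<forall>x\<in>topspace X. K (0, x) = x)"

lemma ambient_isotopy_id: "ambient_isotopy X F (\<lambda>(t, x). x)"
  using homeomorphic_map_id[of X] continuous_map_snd[of "top_of_set {0..1::real}" X]
  by (simp add: ambient_isotopy_def id_def case_prod_unfold)

lemma ambient_isotopy_compose:
  assumes "ambient_isotopy X F K1" "ambient_isotopy X F K2"
  shows "ambient_isotopy X F (\<lambda>(t, x). K2 (t, K1 (t, x)))"
proof -
  let ?P = "prod_topology (top_of_set {0..1::real}) X"
  have "continuous_map ?P ?P (\<lambda>p. (fst p, K1 p))"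
    using assms(1) by (intro continuous_intros) (auto simp: ambient_isotopy_def)
  then have "continuous_map ?P X (K2 \<circ> (\<lambda>p. (fst p, K1 p)))"
    using assms(2) continuous_map_compose by (auto simp: ambient_isotopy_def)
  moreover have "homeomorphic_map X X ((\<lambda>x. K2 (t, x)) \<circ> (\<lambda>x. K1 (t, x)))" if "t \<in> {0..1}" for t
    by (rule homeomorphic_map_compose) (use assms that in \<open>auto simp: ambient_isotopy_def\<close>)
  ultimately show ?thesis
    using assms by (simp add: ambient_isotopy_def o_def case_prod_unfold)
qed

lemma ambient_isotopy_fixes:
  "ambient_isotopy X F K \<Longrightarrow> t \<in> {0..1} \<Longrightarrow> x \<in> manifold_boundary X \<union> F \<Longrightarrow> K (t, x) = x"
  by (simp add: ambient_isotopy_def)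

lemma ambient_isotopy_subset: "ambient_isotopy X F' K \<Longrightarrow> F \<subseteq> F' \<Longrightarrow> ambient_isotopy X F K"
  unfolding ambient_isotopy_def by blast

lemma continuous_map_chart_conjugate:
  fixes g :: "real \<Rightarrow> 'b::topological_space \<Rightarrow> 'b"
  assumes U: "openin X U" and chart: "homeomorphic_maps (subtopology X U) (top_of_set W) \<phi> \<psi>"
    and g_cont: "continuous_on ({0..1} \<times> W) (\<lambda>(t, w). g t w)"
    and g_W: "\<And>t w. t \<in> {0..1} \<Longrightarrow> w \<in> W \<Longrightarrow> g t w \<in> W"
  shows "continuous_map (prod_topology (top_of_set {0..1}) (subtopology X U)) X
           (\<lambda>(t, x). \<psi> (g t (\<phi> x)))"
proof -
  note chartD = chart_homeomorphic_mapsD[OF U chart]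
  let ?I = "top_of_set {0..1::real}"
  have "continuous_map (prod_topology ?I (subtopology X U)) (prod_topology ?I (top_of_set W))
          (\<lambda>p. (fst p, \<phi> (snd p)))"
    using continuous_map_compose[OF continuous_map_snd chartD(6)]
    by (intro continuous_map_pairedI continuous_map_fst) (simp add: o_def)
  moreover have "continuous_map (prod_topology ?I (top_of_set W)) (top_of_set W) (\<lambda>(t, w). g t w)"
    using g_cont g_W by (auto simp: continuous_map_in_subtopology simp flip: subtopology_Times)
  ultimately have "continuous_map (prod_topology ?I (subtopology X U)) (top_of_set W)
                     ((\<lambda>(t, w). g t w) \<circ> (\<lambda>p. (fst p, \<phi> (snd p))))"
    by (rule continuous_map_compose)
  then have "continuous_map (prod_topology ?I (subtopology X U)) X
               (\<psi> \<circ> ((\<lambda>(t, w). g t w) \<circ> (\<lambda>p. (fst p, \<phi> (snd p)))))"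
    using chartD(7) by (rule continuous_map_compose)
  then show ?thesis by (simp add: o_def case_prod_unfold)
qed

lemma continuous_map_chart_extension:
  fixes g :: "real \<Rightarrow> 'b::topological_space \<Rightarrow> 'b"
  assumes X: "Hausdorff_space X" and U: "openin X U"
    and chart: "homeomorphic_maps (subtopology X U) (top_of_set W) \<phi> \<psi>"
    and C: "compact C" "C \<subseteq> W"
    and g_cont: "continuous_on ({0..1} \<times> W) (\<lambda>(t, w). g t w)"
    and g_W: "\<And>t w. t \<in> {0..1} \<Longrightarrow> w \<in> W \<Longrightarrow> g t w \<in> W"
    and g_id: "\<And>t w. t \<in> {0..1} \<Longrightarrow> w \<in> W - C \<Longrightarrow> g t w = w"
  shows "continuous_map (prod_topology (top_of_set {0..1}) X) X
           (\<lambda>(t, x). if x \<in> U then \<psi> (g t (\<phi> x)) else x)"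
proof -
  note chartD = chart_homeomorphic_mapsD[OF U(1) chart]
  define K where "K = (\<lambda>(t, x). if x \<in> U then \<psi> (g t (\<phi> x)) else x)"
  have K_in: "K (t, x) = \<psi> (g t (\<phi> x))" if "x \<in> U" for t x using that by (simp add: K_def)
  have K_out: "K (t, x) = x" if "x \<notin> U" for t x using that by (simp add: K_def)
  let ?I = "top_of_set {0..1::real}"
  let ?P = "prod_topology ?I X"
  have closed_C: "closedin X (\<psi> ` C)"
  proof -
    have "compactin X (\<psi> ` C)"
      by (rule image_compactin[OF _ chartD(7)]) (use C in \<open>simp add: compactin_subtopology\<close>)
    then show ?thesis using compactin_imp_closedin[OF X] by blast
  qed
  have K_id: "K (t, x) = x" if "t \<in> {0..1}" "x \<notin> \<psi> ` C" for t x
  proof (cases "x \<in> U")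
    case True
    then have "\<phi> x \<in> W - C" using that(2) chartD(2,4) by (metis DiffI image_eqI)
    then show ?thesis using True that(1) chartD(4) g_id by (simp add: K_in)
  qed (simp add: K_out)
  have "subtopology ?P ({0..1} \<times> U) = prod_topology ?I (subtopology X U)"
    by (simp add: subtopology_Times subtopology_subtopology)
  then have cont_in_chart: "continuous_map (subtopology ?P ({0..1} \<times> U)) X K"
    using continuous_map_chart_conjugate[OF U chart g_cont g_W]
    by (auto simp: K_in elim!: continuous_map_eq)
  have cont_off_chart: "continuous_map (subtopology ?P ({0..1} \<times> (topspace X - \<psi> ` C))) X K"
    using continuous_map_from_subtopology[OF continuous_map_snd]
    by (rule continuous_map_eq) (auto simp: K_id)
  have "continuous_map ?P X K"
  proof (rule pasting_lemma[where I = "{True, False}" and f = "\<lambda>_. K"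
        and T = "\<lambda>b. if b then {0..1} \<times> U else {0..1} \<times> (topspace X - \<psi> ` C)"])
    show "openin ?P (if b then {0..1} \<times> U else {0..1} \<times> (topspace X - \<psi> ` C))" for b
      using U(1) closed_C by (simp add: openin_prod_Times_iff openin_diff)
    show "continuous_map (subtopology ?P (if b then {0..1} \<times> U else {0..1} \<times> (topspace X - \<psi> ` C))) X K"
      for b using cont_in_chart cont_off_chart by simp
    have "\<psi> ` C \<subseteq> U" using chartD(3) C(2) by blast
    then show "\<exists>b. b \<in> {True, False} \<and> p \<in> (if b then {0..1} \<times> U else {0..1} \<times> (topspace X - \<psi> ` C)) \<and>
            K p = K p" if "p \<in> topspace ?P" for p
      using that by (cases "snd p \<in> U") (auto simp: mem_Times_iff)
  qed simp
  then show ?thesis by (simp add: K_def)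
qed

lemma ambient_isotopy_chart_extension:
  assumes X: "compact_space X" "Hausdorff_space X"
    and U: "openin X U" "U \<inter> manifold_boundary X = {}"
    and chart: "homeomorphic_maps (subtopology X U) (top_of_set W) \<phi> \<psi>"
    and C: "compact C" "C \<subseteq> W"
    and g_cont: "continuous_on ({0..1} \<times> W) (\<lambda>(t, w). g t w)"
    and g_bij: "\<And>t. t \<in> {0..1} \<Longrightarrow> bij_betw (g t) W W"
    and g_id: "\<And>t w. t \<in> {0..1} \<Longrightarrow> w \<in> W - C \<Longrightarrow> g t w = w"
    and g_0: "\<And>w. w \<in> W \<Longrightarrow> g 0 w = w"
    and F: "\<And>x. x \<in> F \<inter> U \<Longrightarrow> \<phi> x \<notin> C"
  shows "ambient_isotopy X F (\<lambda>(t, x). if x \<in> U then \<psi> (g t (\<phi> x)) else x)"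
proof -
  note chartD = chart_homeomorphic_mapsD[OF U(1) chart]
  define K where "K = (\<lambda>(t, x). if x \<in> U then \<psi> (g t (\<phi> x)) else x)"
  have K_in: "K (t, x) = \<psi> (g t (\<phi> x))" if "x \<in> U" for t x using that by (simp add: K_def)
  have K_out: "K (t, x) = x" if "x \<notin> U" for t x using that by (simp add: K_def)
  let ?I = "top_of_set {0..1::real}"
  let ?P = "prod_topology ?I X"
  have "continuous_map ?P X K"
    unfolding K_def
    by (rule continuous_map_chart_extension[OF X(2) U(1) chart C g_cont _ g_id])
      (use bij_betw_apply[OF g_bij] in blast)
  moreover have "homeomorphic_map X X (\<lambda>x. K (t, x))" if t: "t \<in> {0..1}" for t
  proof (rule continuous_imp_homeomorphic_map)
    have "continuous_map X ?P (\<lambda>x. (t, x))" using t by (intro continuous_intros) auto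
    from continuous_map_compose[OF this \<open>continuous_map ?P X K\<close>]
    show "continuous_map X X (\<lambda>x. K (t, x))" by (simp add: o_def)
    have "bij_betw (\<psi> \<circ> (g t \<circ> \<phi>)) U U"
      by (intro bij_betw_trans[OF bij_betw_trans[OF chartD(8) g_bij[OF t]] chartD(9)])
    moreover have "bij_betw (\<lambda>x. x) (topspace X - U) (topspace X - U)"
      by (simp add: bij_betw_def)
    ultimately have "bij_betw (\<lambda>x. if x \<in> U then (\<psi> \<circ> (g t \<circ> \<phi>)) x else x)
                 (U \<union> (topspace X - U)) (U \<union> (topspace X - U))"
      by (rule bij_betw_disjoint_Un) auto
    then have "bij_betw (\<lambda>x. K (t, x)) (topspace X) (topspace X)"
      using chartD(1) by (simp add: K_def Un_absorb1 comp_def cong: if_cong)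
    then show "(\<lambda>x. K (t, x)) ` topspace X = topspace X" "inj_on (\<lambda>x. K (t, x)) (topspace X)"
      by (simp_all add: bij_betw_def)
  qed (use X in auto)
  moreover have "K (t, x) = x" if "t \<in> {0..1}" "x \<in> manifold_boundary X \<union> F" for t x
  proof (cases "x \<in> U")
    case True
    then have "\<phi> x \<in> W - C" using that(2) U(2) F chartD(2) by auto
    then show ?thesis using True that(1) g_id chartD(4) by (simp add: K_in)
  qed (simp add: K_out)
  moreover have "K (0, x) = x" for x
    using g_0 chartD(2,4) by (simp add: K_def)
  ultimately have "ambient_isotopy X F K" by (simp add: ambient_isotopy_def)
  then show ?thesis by (simp add: K_def)
qed

lemma ambient_isotopy_push_in_chart:
  fixes c :: "'b::euclidean_space"
  assumes X: "compact_space X" "Hausdorff_space X"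
    and U: "openin X U" "U \<inter> manifold_boundary X = {}"
    and chart: "homeomorphic_maps (subtopology X U) (top_of_set W) \<phi> \<psi>"
    and ball: "cball c s \<subseteq> W" "norm v < s"
    and F: "\<And>x. x \<in> F \<inter> U \<Longrightarrow> dist (\<phi> x) c > s"
  shows "\<exists>K. ambient_isotopy X F K \<and> K (1, \<psi> c) = \<psi> (c + v)"
proof -
  have s: "s > 0" using ball(2) norm_ge_zero[of v] by linarith
  have small: "norm (t *\<^sub>R v) < s" if "t \<in> {0..1}" for t
    using that ball(2) mult_left_le_one_le[of "norm v" t] by auto
  let ?K = "\<lambda>(t, x). if x \<in> U then \<psi> (push c s (t *\<^sub>R v) (\<phi> x)) else x"
  have "ambient_isotopy X F ?K"
  proof (rule ambient_isotopy_chart_extension[OF X U chart compact_cball ball(1)])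
    show "continuous_on ({0..1} \<times> W) (\<lambda>(t, w). push c s (t *\<^sub>R v) w)"
      using continuous_on_push continuous_on_subset by blast
    show "bij_betw (push c s (t *\<^sub>R v)) W W" if "t \<in> {0..1}" for t
      using bij_betw_push[OF small[OF that] ball(1)] .
    show "push c s (t *\<^sub>R v) w = w" if "t \<in> {0..1}" "w \<in> W - cball c s" for t w
      using that s by (intro push_eq_self) (auto simp: dist_commute)
    show "push c s (0 *\<^sub>R v) w = w" for w by (simp add: push_zero)
    show "\<phi> x \<notin> cball c s" if "x \<in> F \<inter> U" for x
      using F[OF that] by (simp add: dist_commute)
  qed
  moreover have "?K (1, \<psi> c) = \<psi> (c + v)"
  proof -
    have "c \<in> W" using ball(1) s by auto
    then show ?thesis using chart_homeomorphic_mapsD(3,5)[OF U(1) chart] s by (simp add: push_centre)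
  qed
  ultimately show ?thesis by blast
qed

lemma isotopic_points_in_chart:
  fixes z :: "'b::euclidean_space"
  assumes X: "compact_space X" "Hausdorff_space X"
    and U: "openin X U" "U \<inter> manifold_boundary X = {}"
    and chart: "homeomorphic_maps (subtopology X U) (top_of_set W) \<phi> \<psi>"
    and W: "cball z s \<subseteq> W" and F: "\<And>y. y \<in> F \<inter> U \<Longrightarrow> s \<le> dist (\<phi> y) z"
    and p: "p \<in> U" "dist z (\<phi> p) < s/4" and p': "p' \<in> U" "dist z (\<phi> p') < s/4"
  shows "\<exists>K. ambient_isotopy X F K \<and> K (1, p) = p'"
proof -
  have "s > 0" using zero_le_dist[of z "\<phi> p"] p(2) by linarith
  have "cball (\<phi> p) (s/2) \<subseteq> W"
  proof
    fix y assume "y \<in> cball (\<phi> p) (s/2)"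
    then have "dist (\<phi> p) y \<le> s/2" by simp
    then have "dist z y \<le> s" using dist_triangle[of z y "\<phi> p"] p(2) \<open>s > 0\<close> by linarith
    then show "y \<in> W" using W by auto
  qed
  moreover have "norm (\<phi> p' - \<phi> p) < s/2"
    using dist_triangle[of "\<phi> p'" "\<phi> p" z] p(2) p'(2) by (simp add: dist_norm[symmetric] dist_commute)
  moreover have "dist (\<phi> y) (\<phi> p) > s/2" if "y \<in> F \<inter> U" for y
    using F[OF that] dist_triangle[of "\<phi> y" z "\<phi> p"] \<open>s > 0\<close> p(2) by (simp add: dist_commute)
  ultimately have "\<exists>K. ambient_isotopy X F K \<and> K (1, \<psi> (\<phi> p)) = \<psi> (\<phi> p + (\<phi> p' - \<phi> p))"
    by (rule ambient_isotopy_push_in_chart[OF X U chart])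
  then show ?thesis using chart_homeomorphic_mapsD(4)[OF U(1) chart] p(1) p'(1) by simp
qed

lemma locally_isotopic_points:
  assumes X: "compact_space X" "Hausdorff_space X" and F: "finite F"
    and q: "q \<in> topspace X - (manifold_boundary X \<union> F)"
  shows "\<exists>N. openin X N \<and> q \<in> N \<and> N \<subseteq> topspace X - (manifold_boundary X \<union> F) \<and>
           (\<forall>p\<in>N. \<forall>p'\<in>N. \<exists>K. ambient_isotopy X F K \<and> K (1, p) = p')"
proof -
  have "manifold_interior_point X q" using q by (auto simp: manifold_boundary_def)
  then obtain U W where U: "openin X U" "q \<in> U" "open (W::complex set)"
    and "subtopology X U homeomorphic_space top_of_set W"
    unfolding manifold_interior_point_def by blast
  then obtain \<phi> \<psi> where chart: "homeomorphic_maps (subtopology X U) (top_of_set W) \<phi> \<psi>"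
    unfolding homeomorphic_space_def by blast
  note chartD = chart_homeomorphic_mapsD[OF U(1) chart]
  have U_interior: "U \<inter> manifold_boundary X = {}"
    using chart_imp_manifold_interior_point[OF U(1) chart U(3) order_refl] chartD(2)
    by (auto simp: manifold_boundary_def)
  define z where "z = \<phi> q"
  obtain s0 where s0: "s0 > 0" "cball z s0 \<subseteq> W"
    using U(3) chartD(2)[OF U(2)] unfolding open_contains_cball z_def by blast
  define E where "E = \<phi> ` (F \<inter> U)"
  have "finite E" using F by (simp add: E_def)
  have "z \<notin> E"
  proof
    assume "z \<in> E"
    then obtain y where "y \<in> F" "y \<in> U" "\<phi> y = \<phi> q" by (auto simp: E_def z_def)
    then have "y = q" using chartD(4) U(2) by metis
    then show False using q \<open>y \<in> F\<close> by auto
  qed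
  define s where "s = Min (insert s0 ((\<lambda>e. dist e z) ` E))"
  have s: "s > 0" "cball z s \<subseteq> W" "\<And>y. y \<in> F \<inter> U \<Longrightarrow> s \<le> dist (\<phi> y) z"
    using \<open>finite E\<close> s0 \<open>z \<notin> E\<close> by (auto simp: s_def Min_gr_iff E_def)
  define N where "N = {u \<in> U. \<phi> u \<in> ball z (s/4)}"
  have "N \<subseteq> topspace X - (manifold_boundary X \<union> F)"
  proof
    fix u assume u: "u \<in> N"
    have "u \<notin> F"
    proof
      assume "u \<in> F"
      then show False using u s(1) s(3)[of u] by (auto simp: N_def dist_commute)
    qed
    then show "u \<in> topspace X - (manifold_boundary X \<union> F)"
      using u U_interior chartD(1) by (auto simp: N_def)
  qed
  moreover have "\<exists>K. ambient_isotopy X F K \<and> K (1, p) = p'" if "p \<in> N" "p' \<in> N" for p p'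
    using that isotopic_points_in_chart[OF X U(1) U_interior chart s(2,3)] by (simp add: N_def)
  moreover have "openin X N"
    unfolding N_def by (rule openin_chart_preimage[OF U(1) chart open_ball])
  moreover have "q \<in> N" using U(2) s(1) by (simp add: N_def z_def)
  ultimately show ?thesis by blast
qed

lemma isotopic_points:
  assumes X: "compact_space X" "Hausdorff_space X" and F: "finite F"
    and G: "connectedin X (topspace X - (manifold_boundary X \<union> F))"
    and ab: "a \<in> topspace X - (manifold_boundary X \<union> F)" "b \<in> topspace X - (manifold_boundary X \<union> F)"
  shows "\<exists>K. ambient_isotopy X F K \<and> K (1, a) = b"
proof (rule connectedin_locally_related[where R = "\<lambda>p p'. \<exists>K. ambient_isotopy X F K \<and> K (1, p) = p'",
      OF G _ _ ab])
  show "\<exists>K. ambient_isotopy X F K \<and> K (1, x) = z"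
    if xy: "\<exists>K. ambient_isotopy X F K \<and> K (1, x) = y" and yz: "\<exists>K. ambient_isotopy X F K \<and> K (1, y) = z"
    for x y z
  proof -
    obtain K1 K2 where "ambient_isotopy X F K1" "K1 (1, x) = y" "ambient_isotopy X F K2" "K2 (1, y) = z"
      using xy yz by blast
    then show ?thesis using ambient_isotopy_compose[of X F K1 K2] by (intro exI[of _ "\<lambda>(t, x). K2 (t, K1 (t, x))"]) auto
  qed
qed (rule locally_isotopic_points[OF X F])

lemma ambient_isotopy_realising_injection:
  assumes X: "compact_space X" "Hausdorff_space X" "connected_space X" "surface_with_boundary X"
    and A: "finite A"
  shows "\<lbrakk>finite F; A \<subseteq> topspace X - manifold_boundary X; \<sigma> ` A \<subseteq> topspace X - manifold_boundary X;
           inj_on \<sigma> A; A \<inter> \<sigma> ` A = {}; F \<inter> (A \<union> \<sigma> ` A) = {}\<rbrakk>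
         \<Longrightarrow> \<exists>K. ambient_isotopy X F K \<and> (\<forall>a\<in>A. K (1, a) = \<sigma> a)"
  using A
proof (induction A arbitrary: F rule: finite_induct)
  case empty
  then show ?case using ambient_isotopy_id by blast
next
  case (insert a A F)
  have new: "\<sigma> a \<notin> \<sigma> ` A" "a \<notin> \<sigma> ` A" "\<sigma> a \<notin> A" "a \<notin> F" "\<sigma> a \<notin> F"
    using insert.hyps(2) insert.prems(4-6) by auto
  \<comment> \<open>first move A to \<sigma> ` A while keeping a and \<sigma> a fixed, then move a to \<sigma> a keeping \<sigma> ` A fixed\<close>
  have "\<exists>K. ambient_isotopy X (F \<union> {a, \<sigma> a}) K \<and> (\<forall>a'\<in>A. K (1, a') = \<sigma> a')"
  proof (rule insert.IH)
    show "finite (F \<union> {a, \<sigma> a})" using insert.prems(1) by simp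
    show "A \<subseteq> topspace X - manifold_boundary X" "\<sigma> ` A \<subseteq> topspace X - manifold_boundary X"
      using insert.prems(2,3) by auto
    show "inj_on \<sigma> A" using insert.prems(4) by (simp add: inj_on_insert)
    show "A \<inter> \<sigma> ` A = {}" using insert.prems(5) by auto
    show "(F \<union> {a, \<sigma> a}) \<inter> (A \<union> \<sigma> ` A) = {}" using insert.prems(6) insert.hyps(2) new by auto
  qed
  then obtain K1 where K1: "ambient_isotopy X (F \<union> {a, \<sigma> a}) K1" "\<forall>a'\<in>A. K1 (1, a') = \<sigma> a'"
    by blast
  have "\<exists>K. ambient_isotopy X (F \<union> \<sigma> ` A) K \<and> K (1, a) = \<sigma> a"
  proof (rule isotopic_points[OF X(1,2)])
    show "finite (F \<union> \<sigma> ` A)" using insert.prems(1) insert.hyps(1) by simp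
    show "connectedin X (topspace X - (manifold_boundary X \<union> (F \<union> \<sigma> ` A)))"
      using connectedin_surface_interior_diff_finite[OF X(2,3,4) \<open>finite (F \<union> \<sigma> ` A)\<close>] .
    show "a \<in> topspace X - (manifold_boundary X \<union> (F \<union> \<sigma> ` A))"
      "\<sigma> a \<in> topspace X - (manifold_boundary X \<union> (F \<union> \<sigma> ` A))"
      using insert.prems(2,3) new by auto
  qed
  then obtain K2 where K2: "ambient_isotopy X (F \<union> \<sigma> ` A) K2" "K2 (1, a) = \<sigma> a" by blast
  let ?K = "\<lambda>(t, x). K2 (t, K1 (t, x))"
  have "ambient_isotopy X F K1" "ambient_isotopy X F K2"
    using ambient_isotopy_subset[OF K1(1)] ambient_isotopy_subset[OF K2(1)] by auto
  then have "ambient_isotopy X F ?K" by (rule ambient_isotopy_compose)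
  moreover have "?K (1, a) = \<sigma> a"
    using ambient_isotopy_fixes[OF K1(1), of 1 a] K2(2) by simp
  moreover have "?K (1, a') = \<sigma> a'" if "a' \<in> A" for a'
    using K1(2) that ambient_isotopy_fixes[OF K2(1), of 1 "\<sigma> a'"] by simp
  ultimately show ?case by blast
qed

lemma card_Diff_commute:
  assumes "finite A" "finite B" "card A = card B"
  shows "card (A - B) = card (B - A)"
  using assms by (simp add: card_Diff_subset_Int Int_commute)

lemma ambient_isotopy_carrying_onto:
  assumes X: "compact_space X" "Hausdorff_space X" "connected_space X" "surface_with_boundary X"
    and AB: "finite A" "finite B" "card A = card B" "A \<union> B \<subseteq> topspace X - manifold_boundary X"
    and F: "finite F" "F \<inter> (A \<union> B) = {}"
  shows "\<exists>K. ambient_isotopy X F K \<and> (\<lambda>y. K (1, y)) ` A = B"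
proof -
  obtain \<sigma> where \<sigma>: "bij_betw \<sigma> (A - B) (B - A)"
    using finite_same_card_bij card_Diff_commute[OF AB(1-3)] AB(1,2) by (metis finite_Diff)
  have \<sigma>_onto: "\<sigma> ` (A - B) = B - A" using \<sigma> by (simp add: bij_betw_def)
  \<comment> \<open>the points of A \<inter> B stay where they are\<close>
  have "\<exists>K. ambient_isotopy X (F \<union> (A \<inter> B)) K \<and> (\<forall>a\<in>A - B. K (1, a) = \<sigma> a)"
  proof (rule ambient_isotopy_realising_injection[OF X])
    show "finite (A - B)" "finite (F \<union> (A \<inter> B))" using AB(1) F(1) by auto
    show "A - B \<subseteq> topspace X - manifold_boundary X" "\<sigma> ` (A - B) \<subseteq> topspace X - manifold_boundary X"
      using AB(4) \<sigma>_onto by auto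
    show "inj_on \<sigma> (A - B)" using \<sigma> by (simp add: bij_betw_def)
    show "(A - B) \<inter> \<sigma> ` (A - B) = {}" "(F \<union> (A \<inter> B)) \<inter> (A - B \<union> \<sigma> ` (A - B)) = {}"
      using \<sigma>_onto F(2) by auto
  qed
  then obtain K where K: "ambient_isotopy X (F \<union> (A \<inter> B)) K" "\<forall>a\<in>A - B. K (1, a) = \<sigma> a"
    by blast
  have "(\<lambda>y. K (1, y)) ` A = (\<lambda>y. K (1, y)) ` (A \<inter> B) \<union> (\<lambda>y. K (1, y)) ` (A - B)" by blast
  also have "\<dots> = (A \<inter> B) \<union> \<sigma> ` (A - B)"
    using ambient_isotopy_fixes[OF K(1), of 1] K(2) by (auto simp: image_iff)
  also have "\<dots> = B" using \<sigma>_onto by blast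
  finally show ?thesis using ambient_isotopy_subset[OF K(1)] by blast
qed

section \<open>Factorisation\<close>

lemma admissible_pcomp:
  assumes "admissible X Q p" "admissible X Q q"
  shows "admissible X Q (pcomp q p)"
proof -
  have "homeomorphic_map X X (fst p)" "homeomorphic_map X X (fst q)"
    using assms by (simp_all add: admissible_def)
  from homeomorphic_map_compose[OF this] show ?thesis
    using assms by (auto simp: admissible_def pcomp_def)
qed

lemma pisotopic_refl:
  assumes "admissible X Q p"
  shows "pisotopic X Q p p"
  unfolding pisotopic_def
proof (intro conjI exI[of _ "\<lambda>(t, x). fst p x"])
  have "continuous_map X X (fst p)"
    using assms homeomorphic_imp_continuous_map by (auto simp: admissible_def)
  from continuous_map_compose[OF continuous_map_snd this]
  show "continuous_map (prod_topology (top_of_set {0..1::real}) X) X (\<lambda>(t, x). fst p x)"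
    by (simp add: o_def case_prod_unfold)
qed (use assms in auto)

lemma pisotopic_ambient_isotopy:
  assumes p: "admissible X Q (f, D)" and K: "ambient_isotopy X (f ` D) K"
  shows "pisotopic X Q (f, D) (\<lambda>x. K (1, f x), D)"
  unfolding pisotopic_def
proof (intro conjI exI[of _ "\<lambda>(t, x). K (t, f x)"])
  have f: "homeomorphic_map X X f" "\<And>x. x \<in> manifold_boundary X \<Longrightarrow> f x = x" "f ` D \<subseteq> Q"
    using p by (auto simp: admissible_def)
  let ?P = "prod_topology (top_of_set {0..1::real}) X"
  have "continuous_map ?P ?P (\<lambda>q. (fst q, f (snd q)))"
    using continuous_map_compose[OF continuous_map_snd homeomorphic_imp_continuous_map[OF f(1)]]
    by (intro continuous_map_pairedI continuous_map_fst) (simp add: o_def)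
  moreover have "continuous_map ?P X K" using K by (simp add: ambient_isotopy_def)
  ultimately have "continuous_map ?P X (K \<circ> (\<lambda>q. (fst q, f (snd q))))"
    by (rule continuous_map_compose)
  then show "continuous_map ?P X (\<lambda>(t, x). K (t, f x))"
    by (simp add: o_def case_prod_unfold)
  show "\<forall>t\<in>{0..1}. admissible X Q (\<lambda>x. (\<lambda>(t, x). K (t, f x)) (t, x), snd (f, D))"
  proof
    fix t :: real assume t: "t \<in> {0..1}"
    have "homeomorphic_map X X (\<lambda>x. K (t, x))" using K t by (simp add: ambient_isotopy_def)
    from homeomorphic_map_compose[OF f(1) this]
    have "homeomorphic_map X X (\<lambda>x. K (t, f x))" by (simp add: o_def)
    moreover have "K (t, f x) = x" if "x \<in> manifold_boundary X" for x
      using ambient_isotopy_fixes[OF K t] f(2) that by auto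
    moreover have "K (t, f d) = f d" if "d \<in> D" for d
      using ambient_isotopy_fixes[OF K t] that by auto
    ultimately show "admissible X Q (\<lambda>x. (\<lambda>(t, x). K (t, f x)) (t, x), snd (f, D))"
      using p f(3) by (auto simp: admissible_def)
  qed
  show "\<forall>x\<in>topspace X. (\<lambda>(t, x). K (t, f x)) (0, x) = fst (f, D) x \<and>
          (\<lambda>(t, x). K (t, f x)) (1, x) = fst (\<lambda>x. K (1, f x), D) x"
    using K homeomorphic_imp_surjective_map[OF f(1)] by (auto simp: ambient_isotopy_def)
qed simp

lemma card_image_Diff_eq:
  assumes "finite Q" "inj_on f Q" "D \<subseteq> Q" "f ` D \<subseteq> Q"
  shows "card (f ` (Q - D)) = card (Q - f ` D)"
proof -
  have "card (f ` (Q - D)) = card Q - card D"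
    using card_image[OF inj_on_subset[OF assms(2)]] card_Diff_subset[OF finite_subset[OF assms(3,1)] assms(3)]
    by simp
  also have "\<dots> = card Q - card (f ` D)"
    using card_image[OF inj_on_subset[OF assms(2,3)]] by simp
  also have "\<dots> = card (Q - f ` D)"
    using card_Diff_subset[OF finite_subset[OF assms(4,1)] assms(4)] by simp
  finally show ?thesis .
qed

lemma admissible_isotopic_to_unit:
  assumes X: "compact_orientable_surface X"
    and Q: "finite Q" "Q \<subseteq> topspace X - manifold_boundary X"
    and p: "admissible X Q (f, D)"
  shows "\<exists>g. punit X Q (g, Q) \<and> (\<forall>d\<in>D. g d = f d) \<and> pisotopic X Q (f, D) (g, D)"
proof -
  have X': "compact_space X" "Hausdorff_space X" "connected_space X" "surface_with_boundary X"
    using X by (simp_all add: compact_orientable_surface_def)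
  have f: "homeomorphic_map X X f" "\<And>x. x \<in> manifold_boundary X \<Longrightarrow> f x = x" "D \<subseteq> Q" "f ` D \<subseteq> Q"
    using p by (auto simp: admissible_def)
  have inj: "inj_on f Q"
    using inj_on_subset[OF homeomorphic_imp_injective_map[OF f(1)]] Q(2) by blast
  have "\<exists>K. ambient_isotopy X (f ` D) K \<and> (\<lambda>y. K (1, y)) ` f ` (Q - D) = Q - f ` D"
  proof (rule ambient_isotopy_carrying_onto[OF X'])
    show "card (f ` (Q - D)) = card (Q - f ` D)" by (rule card_image_Diff_eq[OF Q(1) inj f(3,4)])
    show "f ` (Q - D) \<union> (Q - f ` D) \<subseteq> topspace X - manifold_boundary X"
      using homeomorphic_map_fixing_boundary_interior[OF f(1,2)] Q(2) by auto
    show "f ` D \<inter> (f ` (Q - D) \<union> (Q - f ` D)) = {}"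
      using inj f(3) by (auto dest: inj_onD)
  qed (use Q(1) f(4) finite_subset in auto)
  then obtain K where K: "ambient_isotopy X (f ` D) K" "(\<lambda>y. K (1, y)) ` f ` (Q - D) = Q - f ` D"
    by blast
  define g where "g x = K (1, f x)" for x
  have agree: "\<forall>d\<in>D. g d = f d" using ambient_isotopy_fixes[OF K(1)] by (simp add: g_def)
  have "g ` Q = g ` D \<union> g ` (Q - D)" using f(3) by blast
  also have "\<dots> = Q" using K(2) agree f(4) by (auto simp: g_def image_image)
  finally have gQ: "g ` Q = Q" .
  have "homeomorphic_map X X g"
  proof -
    have "homeomorphic_map X X (\<lambda>y. K (1, y))" using K(1) by (simp add: ambient_isotopy_def)
    from homeomorphic_map_compose[OF f(1) this] show ?thesis by (simp add: g_def[abs_def] o_def)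
  qed
  moreover have "g x = x" if "x \<in> manifold_boundary X" for x
    using f(2) that ambient_isotopy_fixes[OF K(1), of 1 x] by (simp add: g_def)
  moreover have "pisotopic X Q (f, D) (g, D)"
    using pisotopic_ambient_isotopy[OF p K(1)] by (simp add: g_def[abs_def])
  ultimately show ?thesis
    using gQ agree by (auto simp: punit_def admissible_def)
qed

lemma pidempotent_id:
  assumes "E \<subseteq> Q"
  shows "pidempotent X Q (id, E)"
proof -
  have "admissible X Q (id, E)" using assms by (simp add: admissible_def)
  then show ?thesis by (simp add: pidempotent_def pcomp_def pisotopic_refl)
qed

lemma pcomp_id_unit:
  assumes g: "punit X Q (g, Q)" "\<forall>d\<in>D. g d = f d" and Q: "Q \<subseteq> topspace X" "D \<subseteq> Q"
  shows "pcomp (id, f ` D) (g, Q) = (g, D)"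
proof -
  have "homeomorphic_map X X g" using g(1) by (simp add: punit_def admissible_def)
  then have "inj_on g (topspace X)" by (rule homeomorphic_imp_injective_map)
  then have inj: "inj_on g Q" by (rule inj_on_subset) (rule Q(1))
  have "{d \<in> Q. g d \<in> f ` D} = D"
  proof
    show "D \<subseteq> {d \<in> Q. g d \<in> f ` D}" using Q(2) g(2) by auto
    show "{d \<in> Q. g d \<in> f ` D} \<subseteq> D"
    proof
      fix d assume "d \<in> {d \<in> Q. g d \<in> f ` D}"
      then obtain d' where "d \<in> Q" "d' \<in> D" "g d = g d'" using g(2) by auto
      then show "d \<in> D" using inj_onD[OF inj] Q(2) by blast
    qed
  qed
  then show ?thesis by (simp add: pcomp_def)
qed

theorem mainTheorem6:
  fixes X :: "'a topology" and Q :: "'a set"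
  assumes "compact_orientable_surface X"
    and "finite Q"
    and "Q \<subseteq> topspace X - manifold_boundary X"
  shows "(\<forall>p. admissible X Q p \<longrightarrow>
            (\<exists>e u. pidempotent X Q e \<and> punit X Q u \<and> pisotopic X Q p (pcomp e u)))
       \<and> (\<forall>e u. pidempotent X Q e \<longrightarrow> punit X Q u \<longrightarrow> admissible X Q (pcomp e u))"
proof (intro conjI allI impI)
  fix p assume p: "admissible X Q p"
  obtain f D where fD: "p = (f, D)" by (cases p)
  have D: "D \<subseteq> Q" "f ` D \<subseteq> Q" using p fD by (simp_all add: admissible_def)
  obtain g where g: "punit X Q (g, Q)" "\<forall>d\<in>D. g d = f d" "pisotopic X Q (f, D) (g, D)"
    using admissible_isotopic_to_unit[OF assms] p fD by blast
  have "pidempotent X Q (id, f ` D)" using D(2) by (rule pidempotent_id)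
  moreover have "pcomp (id, f ` D) (g, Q) = (g, D)"
    using pcomp_id_unit[OF g(1,2)] assms(3) D(1) by blast
  ultimately show "\<exists>e u. pidempotent X Q e \<and> punit X Q u \<and> pisotopic X Q p (pcomp e u)"
    using g(1,3) fD by (intro exI[of _ "(id, f ` D)"] exI[of _ "(g, Q)"]) simp
next
  fix e u assume "pidempotent X Q e" "punit X Q u"
  then show "admissible X Q (pcomp e u)"
    by (intro admissible_pcomp) (simp_all add: pidempotent_def punit_def)
qed

end
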